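(* Let $a$ be a spectral measure on $\mathbb S^{n-1}$, let $\Omega\subset\mathbb R^n$ be open and $u\in C^1(\Omega)\cap L^\infty(\mathbb R^n)$. Then for every $x\in\Omega$ and every $r>0$ with $B_{2r}(x)\subset\Omega$, $$\lim_{s\nearrow1}\mathscr M^s_r u(x)=\frac12\Big(\int_{\mathbb S^{n-1}}da\Big)^{-1}\int_{\mathbb S^{n-1}}\big(u(x-r\omega)+u(x+r\omega)\big)\,da(\omega).$$
   Context: A spectral measure is a non-negative finite Borel measure $a$ on $\mathbb S^{n-1}$ with $0<\int_{\mathbb S^{n-1}}da\le\Lambda$. For $s\in(0,1)$, $$\mathscr M^s_r u(x)=c(n,s,a)\,r^{2s}\int_r^\infty d\rho\int_{\mathbb S^{n-1}}da(\omega)\,\frac{u(x+\rho\omega)+u(x-\rho\omega)}{(\rho^2-r^2)^s\rho},\qquad c(n,s,a)=\frac{\sin\pi s}{\pi}\Big(\int_{\mathbb S^{n-1}}da\Big)^{-1}.$$ $B_{2r}(x)$ is the open ball of radius $2r$ centered at $x$. *)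

theory Defs
  imports "HOL-Analysis.Analysis"
begin

definition spectral_measure :: "real \<Rightarrow> 'a::euclidean_space measure \<Rightarrow> bool" where
  "spectral_measure \<Lambda> a \<longleftrightarrow>
     sets a = sets (restrict_space borel (sphere (0::'a) 1)) \<and>
     space a = sphere 0 1 \<and>
     finite_measure a \<and>
     0 < measure a (space a) \<and> measure a (space a) \<le> \<Lambda>"

definition spec_const :: "real \<Rightarrow> 'a::euclidean_space measure \<Rightarrow> real" where
  "spec_const s a = sin (pi * s) / pi * inverse (measure a (space a))"

definition Msr :: "'a::euclidean_space measure \<Rightarrow> real \<Rightarrow> real \<Rightarrow> ('a \<Rightarrow> real) \<Rightarrow> 'a \<Rightarrow> real" where
  "Msr a s r u x = spec_const s a * r powr (2 * s) *
     (LBINT \<rho>:{r<..}. (\<integral>\<omega>. (u (x + \<rho> *\<^sub>R \<omega>) + u (x - \<rho> *\<^sub>R \<omega>)) \<partial>a)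
                        / ((\<rho>\<^sup>2 - r\<^sup>2) powr s * \<rho>))"

end

theory Submission
  imports Defs "HOL-Real_Asymp.Real_Asymp"
begin

text \<open>
  Write \<open>M\<^sup>s\<^sub>r u(x)\<close> as \<open>(\<integral>da)\<^sup>-\<^sup>1 \<cdot> \<integral>\<^sub>r\<^sup>\<infinity> F(\<rho>) k\<^sub>s(\<rho>) d\<rho>\<close>, where
  \<open>F(\<rho>) = \<integral> (u(x+\<rho>\<omega>) + u(x-\<rho>\<omega>)) da(\<omega>)\<close> and
  \<open>k\<^sub>s(\<rho>) = sin(\<pi>s)/\<pi> \<cdot> r\<^sup>2\<^sup>s / ((\<rho>\<^sup>2-r\<^sup>2)\<^sup>s \<rho>)\<close>. As \<open>s \<nearrow> 1\<close> these kernels form an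
  approximate identity at \<open>\<rho> = r\<close> of mass \<open>1/2\<close>. Near \<open>r\<close>, \<open>k\<^sub>s\<close> is comparable to the explicitly
  integrable \<open>\<rho>(\<rho>\<^sup>2-r\<^sup>2)\<^sup>-\<^sup>s\<close>, whose integral over \<open>(r,R)\<close> is \<open>(R\<^sup>2-r\<^sup>2)\<^sup>1\<^sup>-\<^sup>s/(2(1-s))\<close>; since
  \<open>sin(\<pi>s) \<sim> \<pi>(1-s)\<close>, the mass of \<open>k\<^sub>s\<close> on \<open>(r,R)\<close> ends up between \<open>r\<^sup>2/(2R\<^sup>2)\<close> and \<open>1/2\<close>.
  On \<open>(R,\<infinity>)\<close> the mass is \<open>O(sin \<pi>s) \<rightarrow> 0\<close>. Hence \<open>\<integral> F k\<^sub>s \<rightarrow> F(r)/2\<close> for every bounded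
  measurable \<open>F\<close> that is right-continuous at \<open>r\<close>, and the radial function \<open>F\<close> is continuous
  because \<open>u\<close> is uniformly continuous on a closed ball around \<open>x\<close> of radius larger than \<open>r\<close>.
\<close>

lemma set_integral_abs_le:
  fixes f g :: "'a \<Rightarrow> real"
  assumes "set_integrable M A f" "set_integrable M A g" "\<And>x. x \<in> A \<Longrightarrow> \<bar>f x\<bar> \<le> g x"
  shows "\<bar>LINT x:A|M. f x\<bar> \<le> (LINT x:A|M. g x)"
proof -
  have "\<bar>LINT x:A|M. f x\<bar> \<le> (LINT x:A|M. \<bar>f x\<bar>)"
    using set_integral_norm_bound[OF assms(1)] by simp
  also have "\<dots> \<le> (LINT x:A|M. g x)"
    using assms by (intro set_integral_mono set_integrable_abs)
  finally show ?thesis .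
qed

lemma set_integrable_mult_bounded:
  fixes F K :: "'a \<Rightarrow> real"
  assumes "set_integrable M A K" "set_borel_measurable M A (\<lambda>x. F x * K x)"
    and "\<And>x. x \<in> A \<Longrightarrow> \<bar>F x\<bar> \<le> B"
  shows "set_integrable M A (\<lambda>x. F x * K x)"
proof (rule set_integrable_bound[OF set_integrable_mult_right[OF assms(1), of B] assms(2)])
  have "\<bar>F x\<bar> * \<bar>K x\<bar> \<le> \<bar>B\<bar> * \<bar>K x\<bar>" if "x \<in> A" for x
    using assms(3)[OF that] by (intro mult_right_mono) auto
  then show "AE x in M. x \<in> A \<longrightarrow> norm (F x * K x) \<le> norm (B * K x)"
    by (simp add: abs_mult)
qed

lemma set_integral_weighted_deviation:
  fixes F K :: "'a \<Rightarrow> real"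
  assumes "set_integrable M A K" "set_integrable M A (\<lambda>x. F x * K x)"
    and "\<And>x. x \<in> A \<Longrightarrow> 0 \<le> K x" "\<And>x. x \<in> A \<Longrightarrow> \<bar>F x - c\<bar> \<le> \<eta>"
  shows "\<bar>(LINT x:A|M. F x * K x) - c * (LINT x:A|M. K x)\<bar> \<le> \<eta> * (LINT x:A|M. K x)"
proof -
  have "(LINT x:A|M. F x * K x) - c * (LINT x:A|M. K x) = (LINT x:A|M. F x * K x - c * K x)"
    using assms(1,2) by simp
  also have "\<bar>\<dots>\<bar> \<le> (LINT x:A|M. \<eta> * K x)"
  proof (rule set_integral_abs_le)
    show "\<bar>F x * K x - c * K x\<bar> \<le> \<eta> * K x" if "x \<in> A" for x
      using assms(3,4)[OF that] by (simp add: left_diff_distrib[symmetric] abs_mult mult_right_mono)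
  qed (use assms(1,2) in auto)
  finally show ?thesis by simp
qed

lemma set_integral_Ioi_split:
  fixes f :: "real \<Rightarrow> real"
  assumes "r < R" "set_integrable lborel {r<..<R} f" "set_integrable lborel {R<..} f"
  shows "set_integrable lborel {r<..} f"
    and "(LBINT \<rho>:{r<..}. f \<rho>) = (LBINT \<rho>:{r<..<R}. f \<rho>) + (LBINT \<rho>:{R<..}. f \<rho>)"
proof -
  let ?B = "{r<..<R} \<union> {R<..}"
  have diff: "({r<..} - ?B) \<union> (?B - {r<..}) \<subseteq> {R}"
    using assms(1) by auto
  have "set_integrable lborel ?B f"
    using assms by (intro set_integrable_Un) auto
  then show "set_integrable lborel {r<..} f"
    using set_integrable_discrete_difference[of "{R}", OF _ diff, where M=lborel and f=f] by simp
  have "(LBINT \<rho>:{r<..}. f \<rho>) = (LBINT \<rho>:?B. f \<rho>)"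
    using set_integral_discrete_difference[of "{R}", OF _ diff, where M=lborel and f=f] by simp
  also have "\<dots> = (LBINT \<rho>:{r<..<R}. f \<rho>) + (LBINT \<rho>:{R<..}. f \<rho>)"
    using assms by (intro set_integral_Un) auto
  finally show "(LBINT \<rho>:{r<..}. f \<rho>) = (LBINT \<rho>:{r<..<R}. f \<rho>) + (LBINT \<rho>:{R<..}. f \<rho>)" .
qed

lemma abs_integral_le_const_measure:
  fixes f :: "'b \<Rightarrow> real"
  assumes "finite_measure M" "integrable M f" "\<And>\<omega>. \<omega> \<in> space M \<Longrightarrow> \<bar>f \<omega>\<bar> \<le> c"
  shows "\<bar>\<integral>\<omega>. f \<omega> \<partial>M\<bar> \<le> c * measure M (space M)"
proof -
  interpret finite_measure M by fact
  have "\<bar>\<integral>\<omega>. f \<omega> \<partial>M\<bar> \<le> (\<integral>\<omega>. \<bar>f \<omega>\<bar> \<partial>M)"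
    using integral_norm_bound[of M f] by simp
  also have "\<dots> \<le> (\<integral>\<omega>. c \<partial>M)"
    using assms by (intro integral_mono) auto
  finally show ?thesis
    by (simp add: mult.commute)
qed

section \<open>Two explicit integrals\<close>

lemma square_diff_pos: "0 \<le> (r::real) \<Longrightarrow> r < \<rho> \<Longrightarrow> 0 < \<rho>\<^sup>2 - r\<^sup>2"
  using power_strict_mono[of r \<rho> 2] by simp

lemma DERIV_square_diff_powr:
  fixes r p \<rho> :: real
  assumes "0 < \<rho>\<^sup>2 - r\<^sup>2"
  shows "((\<lambda>t. (t\<^sup>2 - r\<^sup>2) powr p) has_real_derivative p * (\<rho>\<^sup>2 - r\<^sup>2) powr (p - 1) * (2 * \<rho>)) (at \<rho>)"
proof -
  have "((\<lambda>t. t\<^sup>2 - r\<^sup>2) has_real_derivative 2 * \<rho>) (at \<rho>)"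
    by (auto intro!: derivative_eq_intros)
  from DERIV_fun_powr[OF this assms, of p] show ?thesis by simp
qed

lemma integral_Ioo_square_diff_powr:
  fixes r R s :: real
  assumes "0 \<le> r" "r < R" "s < 1"
  shows "set_integrable lborel {r<..<R} (\<lambda>\<rho>. \<rho> * (\<rho>\<^sup>2 - r\<^sup>2) powr (-s))"
    and "(LBINT \<rho>:{r<..<R}. \<rho> * (\<rho>\<^sup>2 - r\<^sup>2) powr (-s)) = (R\<^sup>2 - r\<^sup>2) powr (1 - s) / (2 * (1 - s))"
proof -
  define F where "F \<rho> = (\<rho>\<^sup>2 - r\<^sup>2) powr (1 - s) / (2 * (1 - s))" for \<rho>
  have pos: "0 < \<rho>\<^sup>2 - r\<^sup>2" if "ereal r < ereal \<rho>" for \<rho>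
    using that assms square_diff_pos[of r \<rho>] by simp
  have deriv: "(F has_real_derivative \<rho> * (\<rho>\<^sup>2 - r\<^sup>2) powr (-s)) (at \<rho>)"
    if "ereal r < ereal \<rho>" for \<rho>
    unfolding F_def
    by (rule DERIV_cong[OF DERIV_cdivide[OF DERIV_square_diff_powr[OF pos[OF that]]]])
      (use assms in \<open>simp add: field_simps\<close>)
  have cont: "isCont (\<lambda>\<rho>. \<rho> * (\<rho>\<^sup>2 - r\<^sup>2) powr (-s)) \<rho>" if "ereal r < ereal \<rho>" for \<rho>
    using pos[OF that] by (intro continuous_intros) auto
  have lim_r: "((F \<circ> real_of_ereal) \<longlongrightarrow> 0) (at_right (ereal r))"
  proof -
    have "((\<lambda>\<rho>. \<rho>\<^sup>2 - r\<^sup>2) \<longlongrightarrow> 0) (at_right r)"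
      by (rule tendsto_mono[OF at_le[OF subset_UNIV]]) (auto intro!: tendsto_eq_intros)
    moreover have "\<forall>\<^sub>F \<rho> in at_right r. 0 \<le> \<rho>\<^sup>2 - r\<^sup>2"
      using eventually_at_right_less[of r] by eventually_elim (use pos in force)
    ultimately have "((\<lambda>\<rho>. (\<rho>\<^sup>2 - r\<^sup>2) powr (1 - s)) \<longlongrightarrow> 0) (at_right r)"
      using assms by (intro tendsto_zero_powrI) auto
    then show ?thesis
      unfolding ereal_tendsto_simps F_def using tendsto_divide_zero by blast
  qed
  have lim_R: "((F \<circ> real_of_ereal) \<longlongrightarrow> F R) (at_left (ereal R))"
  proof -
    have "isCont F R"
      unfolding F_def using pos[of R] assms by (intro continuous_intros) auto
    then show ?thesis
      unfolding ereal_tendsto_simps isCont_def by (rule tendsto_mono[OF at_le[OF subset_UNIV]])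
  qed
  note FTC = interval_integral_FTC_nonneg[OF _ deriv cont _ lim_r lim_R]
  show "set_integrable lborel {r<..<R} (\<lambda>\<rho>. \<rho> * (\<rho>\<^sup>2 - r\<^sup>2) powr (-s))"
    using FTC(1) assms by simp
  show "(LBINT \<rho>:{r<..<R}. \<rho> * (\<rho>\<^sup>2 - r\<^sup>2) powr (-s)) = (R\<^sup>2 - r\<^sup>2) powr (1 - s) / (2 * (1 - s))"
    using FTC(2) assms by (simp add: interval_lebesgue_integral_le_eq F_def)
qed

lemma integral_Ioi_square_diff_powr:
  fixes r R s :: real
  assumes "0 \<le> r" "r < R" "0 < s"
  shows "set_integrable lborel {R<..} (\<lambda>\<rho>. \<rho> * (\<rho>\<^sup>2 - r\<^sup>2) powr (-s - 1))"
    and "(LBINT \<rho>:{R<..}. \<rho> * (\<rho>\<^sup>2 - r\<^sup>2) powr (-s - 1)) = (R\<^sup>2 - r\<^sup>2) powr (-s) / (2 * s)"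
proof -
  define F where "F \<rho> = - ((\<rho>\<^sup>2 - r\<^sup>2) powr (-s) / (2 * s))" for \<rho>
  have pos: "0 < \<rho>\<^sup>2 - r\<^sup>2" if "ereal R \<le> ereal \<rho>" for \<rho>
    using that assms square_diff_pos[of r \<rho>] by simp
  have deriv: "(F has_real_derivative \<rho> * (\<rho>\<^sup>2 - r\<^sup>2) powr (-s - 1)) (at \<rho>)"
    if "ereal R < ereal \<rho>" for \<rho>
    unfolding F_def
    by (rule DERIV_cong[OF DERIV_minus[OF DERIV_cdivide[OF DERIV_square_diff_powr[OF pos]]]])
      (use assms that in \<open>simp_all add: field_simps\<close>)
  have cont: "isCont (\<lambda>\<rho>. \<rho> * (\<rho>\<^sup>2 - r\<^sup>2) powr (-s - 1)) \<rho>" if "ereal R < ereal \<rho>" for \<rho>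
    using pos[of \<rho>] that by (intro continuous_intros) auto
  have lim_R: "((F \<circ> real_of_ereal) \<longlongrightarrow> F R) (at_right (ereal R))"
  proof -
    have "isCont F R"
      unfolding F_def using pos[of R] assms by (intro continuous_intros) auto
    then show ?thesis
      unfolding ereal_tendsto_simps isCont_def by (rule tendsto_mono[OF at_le[OF subset_UNIV]])
  qed
  have lim_infinity: "((F \<circ> real_of_ereal) \<longlongrightarrow> 0) (at_left \<infinity>)"
  proof -
    have "filterlim (\<lambda>\<rho>::real. \<rho>\<^sup>2 - r\<^sup>2) at_top at_top"
      by real_asymp
    then have "((\<lambda>\<rho>. (\<rho>\<^sup>2 - r\<^sup>2) powr (-s)) \<longlongrightarrow> 0) at_top"
      by (rule tendsto_neg_powr[rotated]) (use assms in simp)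
    then show ?thesis
      unfolding ereal_tendsto_simps F_def using tendsto_minus[OF tendsto_divide_zero] by fastforce
  qed
  note FTC = interval_integral_FTC_nonneg[OF _ deriv cont _ lim_R lim_infinity]
  show "set_integrable lborel {R<..} (\<lambda>\<rho>. \<rho> * (\<rho>\<^sup>2 - r\<^sup>2) powr (-s - 1))"
    using FTC(1) assms by simp
  show "(LBINT \<rho>:{R<..}. \<rho> * (\<rho>\<^sup>2 - r\<^sup>2) powr (-s - 1)) = (R\<^sup>2 - r\<^sup>2) powr (-s) / (2 * s)"
    using FTC(2) assms by (simp add: interval_lebesgue_integral_le_eq F_def)
qed

definition msr_kernel :: "real \<Rightarrow> real \<Rightarrow> real \<Rightarrow> real" where
  "msr_kernel s r \<rho> = 1 / ((\<rho>\<^sup>2 - r\<^sup>2) powr s * \<rho>)"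

definition msr_weight :: "real \<Rightarrow> real \<Rightarrow> real" where
  "msr_weight s r = sin (pi * s) / pi * r powr (2 * s)"

lemma msr_kernel_nonneg: "0 \<le> r \<Longrightarrow> r < \<rho> \<Longrightarrow> 0 \<le> msr_kernel s r \<rho>"
  unfolding msr_kernel_def by simp

lemma msr_kernel_eq:
  assumes "0 \<le> r" "r < \<rho>"
  shows "msr_kernel s r \<rho> = \<rho> * (\<rho>\<^sup>2 - r\<^sup>2) powr (-s) / \<rho>\<^sup>2"
  using assms square_diff_pos[OF assms]
  by (simp add: msr_kernel_def powr_minus field_simps power2_eq_square)

lemma msr_kernel_Ioo_bounds:
  assumes "0 < r" "r < \<rho>" "\<rho> < R"
  shows "\<rho> * (\<rho>\<^sup>2 - r\<^sup>2) powr (-s) / R\<^sup>2 \<le> msr_kernel s r \<rho>"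
    and "msr_kernel s r \<rho> \<le> \<rho> * (\<rho>\<^sup>2 - r\<^sup>2) powr (-s) / r\<^sup>2"
  using assms by (auto simp: msr_kernel_eq intro!: divide_left_mono power_strict_mono)

lemma msr_kernel_le_Ioi:
  assumes "0 \<le> r" "r < \<rho>"
  shows "msr_kernel s r \<rho> \<le> \<rho> * (\<rho>\<^sup>2 - r\<^sup>2) powr (-s - 1)"
proof -
  have "\<rho> * (\<rho>\<^sup>2 - r\<^sup>2) powr (-s) / \<rho>\<^sup>2 \<le> \<rho> * (\<rho>\<^sup>2 - r\<^sup>2) powr (-s) / (\<rho>\<^sup>2 - r\<^sup>2)"
    using assms square_diff_pos[OF assms] by (intro divide_left_mono) auto
  then show ?thesis
    using assms square_diff_pos[OF assms] by (simp add: msr_kernel_eq powr_diff)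
qed

lemma borel_measurable_msr_kernel [measurable]: "msr_kernel s r \<in> borel_measurable borel"
  unfolding msr_kernel_def by measurable

lemma msr_weight_nonneg: "0 \<le> s \<Longrightarrow> s \<le> 1 \<Longrightarrow> 0 \<le> msr_weight s r"
  unfolding msr_weight_def by (simp add: sin_ge_zero)

lemma set_integral_msr_kernel_Ioo:
  fixes r R s :: real
  assumes "0 < r" "r < R" "s < 1"
  shows "set_integrable lborel {r<..<R} (msr_kernel s r)"
    and "(R\<^sup>2 - r\<^sup>2) powr (1 - s) / (2 * (1 - s)) / R\<^sup>2 \<le> (LBINT \<rho>:{r<..<R}. msr_kernel s r \<rho>)"
    and "(LBINT \<rho>:{r<..<R}. msr_kernel s r \<rho>) \<le> (R\<^sup>2 - r\<^sup>2) powr (1 - s) / (2 * (1 - s)) / r\<^sup>2"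
proof -
  note major = integral_Ioo_square_diff_powr[OF less_imp_le[OF assms(1)] assms(2,3)]
  note bounds = msr_kernel_Ioo_bounds[OF assms(1), where R=R]
  have "AE \<rho> in lborel. \<rho> \<in> {r<..<R} \<longrightarrow>
      norm (msr_kernel s r \<rho>) \<le> norm (\<rho> * (\<rho>\<^sup>2 - r\<^sup>2) powr (-s) / r\<^sup>2)"
    using bounds(2) assms(1) by (intro AE_I2) (force simp: msr_kernel_nonneg)
  then show int: "set_integrable lborel {r<..<R} (msr_kernel s r)"
    using set_integrable_divide[OF major(1)] by (rule set_integrable_bound[rotated 2])
      (simp add: set_borel_measurable_def)
  show "(R\<^sup>2 - r\<^sup>2) powr (1 - s) / (2 * (1 - s)) / R\<^sup>2 \<le> (LBINT \<rho>:{r<..<R}. msr_kernel s r \<rho>)"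
    using set_integral_mono[OF set_integrable_divide[OF major(1)] int bounds(1)] major(2) by simp
  show "(LBINT \<rho>:{r<..<R}. msr_kernel s r \<rho>) \<le> (R\<^sup>2 - r\<^sup>2) powr (1 - s) / (2 * (1 - s)) / r\<^sup>2"
    using set_integral_mono[OF int set_integrable_divide[OF major(1)] bounds(2)] major(2) by simp
qed

lemma set_integral_msr_kernel_Ioi:
  fixes r R s :: real
  assumes "0 \<le> r" "r < R" "0 < s"
  shows "set_integrable lborel {R<..} (msr_kernel s r)"
    and "(LBINT \<rho>:{R<..}. msr_kernel s r \<rho>) \<le> (R\<^sup>2 - r\<^sup>2) powr (-s) / (2 * s)"
proof -
  note major = integral_Ioi_square_diff_powr[OF assms]
  have bound: "msr_kernel s r \<rho> \<le> \<rho> * (\<rho>\<^sup>2 - r\<^sup>2) powr (-s - 1)" if "\<rho> \<in> {R<..}" for \<rho>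
    using that assms by (intro msr_kernel_le_Ioi) auto
  have "AE \<rho> in lborel. \<rho> \<in> {R<..} \<longrightarrow>
      norm (msr_kernel s r \<rho>) \<le> norm (\<rho> * (\<rho>\<^sup>2 - r\<^sup>2) powr (-s - 1))"
    using bound assms by (intro AE_I2) (force simp: msr_kernel_nonneg)
  then show int: "set_integrable lborel {R<..} (msr_kernel s r)"
    using major(1) by (rule set_integrable_bound[rotated 2]) (simp add: set_borel_measurable_def)
  show "(LBINT \<rho>:{R<..}. msr_kernel s r \<rho>) \<le> (R\<^sup>2 - r\<^sup>2) powr (-s) / (2 * s)"
    using set_integral_mono[OF int major(1) bound] major(2) by simp
qed

lemma set_integral_msr_kernel_Ioi_bounded:
  fixes F :: "real \<Rightarrow> real"
  assumes "0 \<le> r" "r < R" "0 < s" "F \<in> borel_measurable borel" "\<And>\<rho>. \<bar>F \<rho>\<bar> \<le> B"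
  shows "set_integrable lborel {R<..} (\<lambda>\<rho>. F \<rho> * msr_kernel s r \<rho>)"
    and "\<bar>LBINT \<rho>:{R<..}. F \<rho> * msr_kernel s r \<rho>\<bar> \<le> B * ((R\<^sup>2 - r\<^sup>2) powr (-s) / (2 * s))"
proof -
  note kernel = set_integral_msr_kernel_Ioi[OF assms(1-3)]
  have "0 \<le> B"
    using assms(5)[of 0] by simp
  show int: "set_integrable lborel {R<..} (\<lambda>\<rho>. F \<rho> * msr_kernel s r \<rho>)"
    using assms kernel(1) by (intro set_integrable_mult_bounded) (auto simp: set_borel_measurable_def)
  have "\<bar>LBINT \<rho>:{R<..}. F \<rho> * msr_kernel s r \<rho>\<bar> \<le> (LBINT \<rho>:{R<..}. B * msr_kernel s r \<rho>)"
    using assms int kernel(1) by (intro set_integral_abs_le)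
      (auto simp: abs_mult msr_kernel_nonneg intro!: mult_right_mono)
  also have "\<dots> \<le> B * ((R\<^sup>2 - r\<^sup>2) powr (-s) / (2 * s))"
    using mult_left_mono[OF kernel(2) \<open>0 \<le> B\<close>] by simp
  finally show "\<bar>LBINT \<rho>:{R<..}. F \<rho> * msr_kernel s r \<rho>\<bar> \<le> B * ((R\<^sup>2 - r\<^sup>2) powr (-s) / (2 * s))" .
qed

section \<open>The kernel as an approximate identity\<close>

lemma tendsto_msr_weight_Ioo:
  fixes r R :: real
  assumes "0 < r" "r < R"
  shows "((\<lambda>s. msr_weight s r * ((R\<^sup>2 - r\<^sup>2) powr (1 - s) / (2 * (1 - s)))) \<longlongrightarrow> r\<^sup>2 / 2) (at_left 1)"
proof -
  have pos: "0 < R\<^sup>2 - r\<^sup>2"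
    using square_diff_pos assms by simp
  have sin: "((\<lambda>s::real. sin (pi * s) / (pi * (1 - s))) \<longlongrightarrow> 1) (at_left 1)"
    by real_asymp
  have "((\<lambda>s. r powr (2 * s) * (R\<^sup>2 - r\<^sup>2) powr (1 - s) / 2)
      \<longlongrightarrow> r powr (2 * 1) * (R\<^sup>2 - r\<^sup>2) powr (1 - 1) / 2) (at_left 1)"
    using assms pos by (intro tendsto_intros) auto
  then have powers: "((\<lambda>s. r powr (2 * s) * (R\<^sup>2 - r\<^sup>2) powr (1 - s) / 2) \<longlongrightarrow> r\<^sup>2 / 2) (at_left 1)"
    using assms by simp
  have "((\<lambda>s. sin (pi * s) / (pi * (1 - s)) * (r powr (2 * s) * (R\<^sup>2 - r\<^sup>2) powr (1 - s) / 2))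
      \<longlongrightarrow> r\<^sup>2 / 2) (at_left 1)"
    using tendsto_mult[OF sin powers] by simp
  then show ?thesis
  proof (rule Lim_transform_eventually)
    show "\<forall>\<^sub>F s in at_left 1. sin (pi * s) / (pi * (1 - s)) * (r powr (2 * s) * (R\<^sup>2 - r\<^sup>2) powr (1 - s) / 2)
       = msr_weight s r * ((R\<^sup>2 - r\<^sup>2) powr (1 - s) / (2 * (1 - s)))"
      using eventually_at_left_real[of 0 1] by (rule eventually_mono) (auto simp: msr_weight_def field_simps)
  qed
qed

lemma tendsto_msr_weight_Ioi:
  fixes r R :: real
  assumes "0 < r" "r < R"
  shows "((\<lambda>s. msr_weight s r * ((R\<^sup>2 - r\<^sup>2) powr (-s) / (2 * s))) \<longlongrightarrow> 0) (at_left 1)"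
proof -
  have "((\<lambda>s. msr_weight s r * ((R\<^sup>2 - r\<^sup>2) powr (-s) / (2 * s)))
      \<longlongrightarrow> sin (pi * 1) / pi * r powr (2 * 1) * ((R\<^sup>2 - r\<^sup>2) powr (-1) / (2 * 1))) (at_left 1)"
    unfolding msr_weight_def using assms square_diff_pos[of r R] by (intro tendsto_intros) auto
  then show ?thesis by simp
qed

lemma eventually_msr_kernel_mass_Ioo:
  fixes r \<delta> :: real
  assumes "0 < r" "0 < \<delta>"
  shows "\<forall>\<^sub>F R in at_right r. \<forall>\<^sub>F s in at_left 1.
           \<bar>msr_weight s r * (LBINT \<rho>:{r<..<R}. msr_kernel s r \<rho>) - 1/2\<bar> < \<delta>"
proof -
  have "isCont (\<lambda>R. r\<^sup>2 / (2 * R\<^sup>2)) r"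
    using assms by (intro continuous_intros) auto
  then have "((\<lambda>R. r\<^sup>2 / (2 * R\<^sup>2)) \<longlongrightarrow> 1/2) (at_right r)"
    using assms by (simp add: isCont_def tendsto_mono[OF at_le[OF subset_UNIV]])
  then have "\<forall>\<^sub>F R in at_right r. 1/2 - \<delta> < r\<^sup>2 / (2 * R\<^sup>2)"
    using assms by (intro order_tendstoD) auto
  with eventually_at_right_less[of r] show ?thesis
  proof eventually_elim
    case (elim R)
    define I where "I s = (R\<^sup>2 - r\<^sup>2) powr (1 - s) / (2 * (1 - s))" for s
    note lim = tendsto_msr_weight_Ioo[OF assms(1) elim(1), folded I_def]
    have "\<forall>\<^sub>F s in at_left 1. msr_weight s r * (I s / r\<^sup>2) < 1/2 + \<delta>"
      using assms tendsto_divide[OF lim tendsto_const, of "r\<^sup>2"]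
      by (intro order_tendstoD) (auto simp: mult_ac)
    moreover have "\<forall>\<^sub>F s in at_left 1. 1/2 - \<delta> < msr_weight s r * (I s / R\<^sup>2)"
      using assms elim tendsto_divide[OF lim tendsto_const, of "R\<^sup>2"]
      by (intro order_tendstoD) (auto simp: mult_ac)
    moreover have "\<forall>\<^sub>F s in at_left 1. s \<in> {0<..<1::real}"
      by (rule eventually_at_left_real) simp
    ultimately show ?case
    proof eventually_elim
      case (elim s)
      then have "s < 1" by simp
      note mass = set_integral_msr_kernel_Ioo[OF assms(1) \<open>r < R\<close> this, folded I_def]
      have "0 \<le> msr_weight s r"
        using elim by (intro msr_weight_nonneg) auto
      from mult_left_mono[OF mass(2) this] mult_left_mono[OF mass(3) this] show ?case
        using elim by linarith
    qed
  qed
qed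

lemma tendsto_msr_kernel_Ioi:
  fixes F :: "real \<Rightarrow> real"
  assumes "0 < r" "r < R" "F \<in> borel_measurable borel" "\<And>\<rho>. \<bar>F \<rho>\<bar> \<le> B"
  shows "((\<lambda>s. msr_weight s r * (LBINT \<rho>:{R<..}. F \<rho> * msr_kernel s r \<rho>)) \<longlongrightarrow> 0) (at_left 1)"
proof (rule Lim_null_comparison)
  show "((\<lambda>s. B * (msr_weight s r * ((R\<^sup>2 - r\<^sup>2) powr (-s) / (2 * s)))) \<longlongrightarrow> 0) (at_left 1)"
    by (rule tendsto_mult_right_zero[OF tendsto_msr_weight_Ioi[OF assms(1,2)]])
  show "\<forall>\<^sub>F s in at_left 1. norm (msr_weight s r * (LBINT \<rho>:{R<..}. F \<rho> * msr_kernel s r \<rho>))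
      \<le> B * (msr_weight s r * ((R\<^sup>2 - r\<^sup>2) powr (-s) / (2 * s)))"
    using eventually_at_left_real[OF zero_less_one]
  proof (rule eventually_mono)
    fix s :: real assume s: "s \<in> {0<..<1}"
    with assms have "\<bar>LBINT \<rho>:{R<..}. F \<rho> * msr_kernel s r \<rho>\<bar> \<le> B * ((R\<^sup>2 - r\<^sup>2) powr (-s) / (2 * s))"
      by (intro set_integral_msr_kernel_Ioi_bounded) auto
    from mult_left_mono[OF this msr_weight_nonneg[of s r]] s
    show "norm (msr_weight s r * (LBINT \<rho>:{R<..}. F \<rho> * msr_kernel s r \<rho>))
        \<le> B * (msr_weight s r * ((R\<^sup>2 - r\<^sup>2) powr (-s) / (2 * s)))"
      by (simp add: abs_mult msr_weight_nonneg mult_ac)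
  qed
qed

lemma msr_kernel_integral_error:
  fixes F :: "real \<Rightarrow> real"
  assumes "0 < r" "r < R" "0 < s" "s < 1" "F \<in> borel_measurable borel" "\<And>\<rho>. \<bar>F \<rho>\<bar> \<le> B"
    and near: "\<And>\<rho>. \<rho> \<in> {r<..<R} \<Longrightarrow> \<bar>F \<rho> - F r\<bar> \<le> \<eta>" and "0 \<le> \<eta>"
    and mass: "msr_weight s r * (LBINT \<rho>:{r<..<R}. msr_kernel s r \<rho>) \<le> 1"
  shows "\<bar>msr_weight s r * (LBINT \<rho>:{r<..}. F \<rho> * msr_kernel s r \<rho>) - F r / 2\<bar>
    \<le> \<bar>F r\<bar> * \<bar>msr_weight s r * (LBINT \<rho>:{r<..<R}. msr_kernel s r \<rho>) - 1/2\<bar> + \<eta>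
      + \<bar>msr_weight s r * (LBINT \<rho>:{R<..}. F \<rho> * msr_kernel s r \<rho>)\<bar>"
proof -
  define P where "P = msr_weight s r"
  define Ik where "Ik = (LBINT \<rho>:{r<..<R}. msr_kernel s r \<rho>)"
  define N where "N = (LBINT \<rho>:{r<..<R}. F \<rho> * msr_kernel s r \<rho>)"
  define T where "T = (LBINT \<rho>:{R<..}. F \<rho> * msr_kernel s r \<rho>)"
  have "0 \<le> P"
    using assms by (simp add: P_def msr_weight_nonneg)
  note kernel = set_integral_msr_kernel_Ioo[OF assms(1,2,4)]
  have near_int: "set_integrable lborel {r<..<R} (\<lambda>\<rho>. F \<rho> * msr_kernel s r \<rho>)"
    using assms kernel(1) by (intro set_integrable_mult_bounded) (auto simp: set_borel_measurable_def)
  have split: "(LBINT \<rho>:{r<..}. F \<rho> * msr_kernel s r \<rho>) = N + T"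
    unfolding N_def T_def using assms near_int set_integral_msr_kernel_Ioi_bounded(1)[of r R s F B]
    by (intro set_integral_Ioi_split(2)) auto
  have "\<bar>N - F r * Ik\<bar> \<le> \<eta> * Ik"
    unfolding N_def Ik_def using near_int kernel(1) assms(1)
    by (intro set_integral_weighted_deviation near) (auto simp: msr_kernel_nonneg)
  from mult_left_mono[OF this \<open>0 \<le> P\<close>] have "\<bar>P * (N - F r * Ik)\<bar> \<le> \<eta> * (P * Ik)"
    using \<open>0 \<le> P\<close> by (simp add: abs_mult mult_ac)
  also have "\<dots> \<le> \<eta>"
    using mass \<open>0 \<le> \<eta>\<close> by (simp add: P_def Ik_def mult_left_le)
  finally have near_part: "\<bar>P * (N - F r * Ik)\<bar> \<le> \<eta>" .
  have "P * (N + T) - F r / 2 = F r * (P * Ik - 1/2) + P * (N - F r * Ik) + P * T"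
    by (simp add: algebra_simps)
  then have "\<bar>P * (N + T) - F r / 2\<bar> \<le> \<bar>F r\<bar> * \<bar>P * Ik - 1/2\<bar> + \<eta> + \<bar>P * T\<bar>"
    using abs_triangle_ineq[of "F r * (P * Ik - 1/2) + P * (N - F r * Ik)" "P * T"]
      abs_triangle_ineq[of "F r * (P * Ik - 1/2)" "P * (N - F r * Ik)"] near_part
    by (simp add: abs_mult)
  then show ?thesis
    by (simp add: split P_def Ik_def T_def)
qed

lemma tendsto_msr_kernel_integral:
  fixes F :: "real \<Rightarrow> real"
  assumes "0 < r" "F \<in> borel_measurable borel" "\<And>\<rho>. \<bar>F \<rho>\<bar> \<le> B" "(F \<longlongrightarrow> F r) (at_right r)"
  shows "((\<lambda>s. msr_weight s r * (LBINT \<rho>:{r<..}. F \<rho> * msr_kernel s r \<rho>)) \<longlongrightarrow> F r / 2) (at_left 1)"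
proof (rule tendstoI)
  fix e :: real assume "0 < e"
  define \<delta> where "\<delta> = min (1/2) (e / (4 * (\<bar>F r\<bar> + 1)))"
  have "0 < \<delta>" and "\<delta> \<le> 1/2"
    using \<open>0 < e\<close> unfolding \<delta>_def by (simp_all only: min.cobounded1) simp
  have "\<bar>F r\<bar> * \<delta> \<le> (\<bar>F r\<bar> + 1) * (e / (4 * (\<bar>F r\<bar> + 1)))"
    using \<open>0 < \<delta>\<close> unfolding \<delta>_def by (intro mult_mono) auto
  also have "\<dots> = e / 4"
    using abs_ge_zero[of "F r"] by (simp add: field_simps)
  finally have "\<bar>F r\<bar> * \<delta> \<le> e / 4" .
  have "\<forall>\<^sub>F \<rho> in at_right r. dist (F \<rho>) (F r) < e / 4"
    using assms(4) \<open>0 < e\<close> by (intro tendstoD) auto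
  then have "\<forall>\<^sub>F R in at_right r. \<forall>\<rho>\<in>{r<..<R}. \<bar>F \<rho> - F r\<bar> \<le> e / 4"
    by (auto simp: eventually_at_right_field dist_real_def less_imp_le)
  with eventually_msr_kernel_mass_Ioo[OF assms(1) \<open>0 < \<delta>\<close>] eventually_at_right_less[of r]
  have "\<forall>\<^sub>F R in at_right r. r < R \<and> (\<forall>\<rho>\<in>{r<..<R}. \<bar>F \<rho> - F r\<bar> \<le> e / 4) \<and>
      (\<forall>\<^sub>F s in at_left 1. \<bar>msr_weight s r * (LBINT \<rho>:{r<..<R}. msr_kernel s r \<rho>) - 1/2\<bar> < \<delta>)"
    by (intro eventually_conj)
  from eventually_happens'[OF trivial_limit_at_right_real this]
  obtain R where "r < R" and near: "\<And>\<rho>. \<rho> \<in> {r<..<R} \<Longrightarrow> \<bar>F \<rho> - F r\<bar> \<le> e / 4"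
    and mass: "\<forall>\<^sub>F s in at_left 1. \<bar>msr_weight s r * (LBINT \<rho>:{r<..<R}. msr_kernel s r \<rho>) - 1/2\<bar> < \<delta>"
    by blast
  have tail: "\<forall>\<^sub>F s in at_left 1. \<bar>msr_weight s r * (LBINT \<rho>:{R<..}. F \<rho> * msr_kernel s r \<rho>)\<bar> < e / 4"
    using tendstoD[OF tendsto_msr_kernel_Ioi[OF assms(1) \<open>r < R\<close> assms(2,3)], of "e / 4"] \<open>0 < e\<close>
    by simp
  show "\<forall>\<^sub>F s in at_left 1. dist (msr_weight s r * (LBINT \<rho>:{r<..}. F \<rho> * msr_kernel s r \<rho>)) (F r / 2) < e"
    using mass tail eventually_at_left_real[OF zero_less_one]
  proof eventually_elim
    case (elim s)
    then have "msr_weight s r * (LBINT \<rho>:{r<..<R}. msr_kernel s r \<rho>) \<le> 1"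
      using \<open>\<delta> \<le> 1/2\<close> by linarith
    note error = msr_kernel_integral_error[OF assms(1) \<open>r < R\<close> _ _ assms(2,3) near _ this]
    have "\<bar>F r\<bar> * \<bar>msr_weight s r * (LBINT \<rho>:{r<..<R}. msr_kernel s r \<rho>) - 1/2\<bar> \<le> e / 4"
      using mult_left_mono[OF less_imp_le[OF elim(1)] abs_ge_zero[of "F r"]] \<open>\<bar>F r\<bar> * \<delta> \<le> e / 4\<close>
      by linarith
    then show ?case
      using error elim \<open>0 < e\<close> by (simp add: dist_real_def)
  qed
qed

section \<open>The radial integral\<close>

definition radial_integral :: "'a::euclidean_space measure \<Rightarrow> ('a \<Rightarrow> real) \<Rightarrow> 'a \<Rightarrow> real \<Rightarrow> real" where
  "radial_integral a u x \<rho> = (\<integral>\<omega>. u (x + \<rho> *\<^sub>R \<omega>) + u (x - \<rho> *\<^sub>R \<omega>) \<partial>a)"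

lemma Msr_eq_msr_kernel:
  "Msr a s r u x = inverse (measure a (space a)) *
     (msr_weight s r * (LBINT \<rho>:{r<..}. radial_integral a u x \<rho> * msr_kernel s r \<rho>))"
  unfolding Msr_def spec_const_def msr_weight_def msr_kernel_def radial_integral_def
  by (simp add: mult_ac)

lemma abs_radial_diff_less:
  fixes u :: "'a::real_normed_vector \<Rightarrow> real"
  assumes d: "\<And>y y'. y \<in> cball x R \<Longrightarrow> y' \<in> cball x R \<Longrightarrow> dist y' y < d \<Longrightarrow> dist (u y') (u y) < e"
    and "norm \<omega> \<le> 1" "\<bar>\<rho>\<bar> \<le> R" "\<bar>r\<bar> \<le> R" "\<bar>\<rho> - r\<bar> < d"
  shows "\<bar>(u (x + \<rho> *\<^sub>R \<omega>) + u (x - \<rho> *\<^sub>R \<omega>)) - (u (x + r *\<^sub>R \<omega>) + u (x - r *\<^sub>R \<omega>))\<bar> < 2 * e"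
proof -
  have "norm (\<rho> *\<^sub>R \<omega>) \<le> R" "norm (r *\<^sub>R \<omega>) \<le> R" "norm ((\<rho> - r) *\<^sub>R \<omega>) < d"
    using assms(2-) mult_left_le[of "norm \<omega>" "\<bar>\<rho>\<bar>"] mult_left_le[of "norm \<omega>" "\<bar>r\<bar>"]
      mult_left_le[of "norm \<omega>" "\<bar>\<rho> - r\<bar>"]
    by auto
  then have "x + \<rho> *\<^sub>R \<omega> \<in> cball x R" "x + r *\<^sub>R \<omega> \<in> cball x R"
    "x - \<rho> *\<^sub>R \<omega> \<in> cball x R" "x - r *\<^sub>R \<omega> \<in> cball x R"
    "dist (x + \<rho> *\<^sub>R \<omega>) (x + r *\<^sub>R \<omega>) < d" "dist (x - \<rho> *\<^sub>R \<omega>) (x - r *\<^sub>R \<omega>) < d"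
    by (simp_all add: dist_norm scaleR_diff_left norm_minus_commute)
  from d[OF this(2,1,5)] d[OF this(4,3,6)] show ?thesis
    by (simp add: dist_real_def)
qed

context
  fixes a :: "'a::euclidean_space measure" and u :: "'a \<Rightarrow> real" and B :: real
  assumes finite: "finite_measure a"
    and ident_measurable [measurable]: "(\<lambda>\<omega>. \<omega>) \<in> borel_measurable a"
    and u_measurable [measurable]: "u \<in> borel_measurable borel"
    and u_bounded: "\<And>y. \<bar>u y\<bar> \<le> B"
begin

lemma abs_radial_le: "\<bar>u (x + \<rho> *\<^sub>R \<omega>) + u (x - \<rho> *\<^sub>R \<omega>)\<bar> \<le> 2 * B"
  using u_bounded[of "x + \<rho> *\<^sub>R \<omega>"] u_bounded[of "x - \<rho> *\<^sub>R \<omega>"]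
    abs_triangle_ineq[of "u (x + \<rho> *\<^sub>R \<omega>)" "u (x - \<rho> *\<^sub>R \<omega>)"]
  by linarith

lemma integrable_radial: "integrable a (\<lambda>\<omega>. u (x + \<rho> *\<^sub>R \<omega>) + u (x - \<rho> *\<^sub>R \<omega>))"
  by (intro finite_measure.integrable_const_bound[OF finite, where B="2 * B"])
    (auto intro!: AE_I2 abs_radial_le)

lemma borel_measurable_radial_integral: "radial_integral a u x \<in> borel_measurable borel"
proof -
  interpret finite_measure a by (rule finite)
  show ?thesis
    unfolding radial_integral_def by measurable
qed

lemma abs_radial_integral_le: "\<bar>radial_integral a u x \<rho>\<bar> \<le> 2 * B * measure a (space a)"
  unfolding radial_integral_def
  by (intro abs_integral_le_const_measure[OF finite integrable_radial] abs_radial_le)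

lemma isCont_radial_integral:
  assumes "space a \<subseteq> cball 0 1" "continuous_on (cball x R) u" "\<bar>r\<bar> < R"
  shows "isCont (radial_integral a u x) r"
  unfolding continuous_at_eps_delta
proof (intro allI impI)
  fix e :: real assume "0 < e"
  define A where "A = measure a (space a)"
  define e' where "e' = e / (2 * (A + 1))"
  have "0 \<le> A"
    by (simp add: A_def)
  then have "0 < e'" "2 * e' * A < e"
    using \<open>0 < e\<close> by (auto simp: e'_def field_simps)
  have "uniformly_continuous_on (cball x R) u"
    using assms(2) by (intro compact_uniformly_continuous) auto
  then obtain d where "0 < d"
    and d: "\<And>y y'. y \<in> cball x R \<Longrightarrow> y' \<in> cball x R \<Longrightarrow> dist y' y < d \<Longrightarrow> dist (u y') (u y) < e'"
    using \<open>0 < e'\<close> unfolding uniformly_continuous_on_def by metis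
  show "\<exists>d>0. \<forall>\<rho>. dist \<rho> r < d \<longrightarrow> dist (radial_integral a u x \<rho>) (radial_integral a u x r) < e"
  proof (intro exI[of _ "min d (R - \<bar>r\<bar>)"] conjI allI impI)
    show "0 < min d (R - \<bar>r\<bar>)"
      using \<open>0 < d\<close> assms(3) by simp
    fix \<rho> assume \<rho>: "dist \<rho> r < min d (R - \<bar>r\<bar>)"
    have "\<bar>\<rho>\<bar> \<le> \<bar>\<rho> - r\<bar> + \<bar>r\<bar>"
      using abs_triangle_ineq[of "\<rho> - r" r] by simp
    with \<rho> have "\<bar>\<rho>\<bar> \<le> R"
      by (simp add: dist_real_def)
    with \<rho> assms have "\<bar>(u (x + \<rho> *\<^sub>R \<omega>) + u (x - \<rho> *\<^sub>R \<omega>)) - (u (x + r *\<^sub>R \<omega>) + u (x - r *\<^sub>R \<omega>))\<bar>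
        \<le> 2 * e'" if "\<omega> \<in> space a" for \<omega>
      using that by (intro less_imp_le[OF abs_radial_diff_less[OF d]]) (auto simp: dist_real_def)
    then have "\<bar>radial_integral a u x \<rho> - radial_integral a u x r\<bar> \<le> 2 * e' * A"
      unfolding radial_integral_def A_def
      by (subst Bochner_Integration.integral_diff[OF integrable_radial integrable_radial, symmetric])
        (intro abs_integral_le_const_measure[OF finite] Bochner_Integration.integrable_diff integrable_radial)
    with \<open>2 * e' * A < e\<close>
    show "dist (radial_integral a u x \<rho>) (radial_integral a u x r) < e"
      by (simp add: dist_real_def)
  qed
qed

end

lemma spectral_measureD:
  fixes a :: "'a::euclidean_space measure"
  assumes "spectral_measure \<Lambda> a"
  shows "finite_measure a" and "(\<lambda>\<omega>. \<omega>) \<in> borel_measurable a" and "space a \<subseteq> cball 0 1"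
proof -
  note spectral = assms[unfolded spectral_measure_def]
  show "finite_measure a" "space a \<subseteq> cball 0 1"
    using spectral by auto
  have "(\<lambda>\<omega>. \<omega>) \<in> borel_measurable (restrict_space borel (sphere (0::'a) 1))"
    by (rule measurable_restrict_space1) simp
  then show "(\<lambda>\<omega>. \<omega>) \<in> borel_measurable a"
    using spectral measurable_cong_sets[of a "restrict_space borel (sphere (0::'a) 1)" borel borel]
    by auto
qed

theorem proposition5p2:
  fixes a :: "'a::euclidean_space measure" and \<Lambda> :: real
    and \<Omega> :: "'a set" and u :: "'a \<Rightarrow> real" and x :: 'a and r :: real
  assumes "spectral_measure \<Lambda> a"
    and "open \<Omega>"
    and "\<exists>D :: 'a \<Rightarrow> 'a \<Rightarrow>\<^sub>L real. (\<forall>y\<in>\<Omega>. (u has_derivative blinfun_apply (D y)) (at y))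
                                  \<and> continuous_on \<Omega> D"
    and "u \<in> borel_measurable borel" and "bounded (range u)"
    and "x \<in> \<Omega>" and "r > 0" and "ball x (2 * r) \<subseteq> \<Omega>"
  shows "((\<lambda>s. Msr a s r u x) \<longlongrightarrow>
           1/2 * inverse (measure a (space a)) *
             (\<integral>\<omega>. (u (x - r *\<^sub>R \<omega>) + u (x + r *\<^sub>R \<omega>)) \<partial>a)) (at_left 1)"
proof -
  note spectral = spectral_measureD[OF assms(1)]
  obtain B where B: "\<And>y. \<bar>u y\<bar> \<le> B"
    using assms(5) unfolding bounded_iff by auto
  have "continuous_on (cball x (3/2 * r)) u"
  proof (intro continuous_at_imp_continuous_on ballI)
    fix y assume "y \<in> cball x (3/2 * r)"
    then have "y \<in> \<Omega>"
      using assms(7,8) by (auto simp: subset_iff)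
    with assms(3) show "isCont u y"
      using has_derivative_continuous by blast
  qed
  then have "isCont (radial_integral a u x) r"
    using assms(7) by (intro isCont_radial_integral[OF spectral(1,2) assms(4) B spectral(3)]) auto
  then have "(radial_integral a u x \<longlongrightarrow> radial_integral a u x r) (at_right r)"
    unfolding isCont_def by (rule tendsto_mono[OF at_le[OF subset_UNIV]])
  from tendsto_msr_kernel_integral[OF assms(7) borel_measurable_radial_integral[OF spectral(1,2) assms(4) B]
      abs_radial_integral_le[OF spectral(1,2) assms(4) B] this]
  have "((\<lambda>s. Msr a s r u x) \<longlongrightarrow> inverse (measure a (space a)) * (radial_integral a u x r / 2)) (at_left 1)"
    unfolding Msr_eq_msr_kernel by (rule tendsto_mult_left)
  then show ?thesis
    by (simp add: radial_integral_def add.commute mult_ac)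
qed

end
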